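(* Let $G$ be a finite nonabelian group having a self-normalising subgroup $S$ (i.e. $N_G(S)=S$) of index $[G:S]=4$. Then $\beta(G)\ge \frac{3}{2}|G|$.
   Context: For a nonempty subset $X$ of a group $G$, $Q(X):=\{xy^{-1}: x,y\in X\}$. Nonempty subsets $S_1,S_2,S_3$ of $G$ satisfy the Triple Product Property (TPP) if for all $s_i\in Q(S_i)$: $s_1s_2s_3=1$ iff $s_1=s_2=s_3=1$. A group $G$ realizes $\langle n,p,m\rangle$ if there are subsets $S_1,S_2,S_3\subseteq G$ with $|S_1|=n$, $|S_2|=p$, $|S_3|=m$ satisfying the TPP. For a nontrivial finite group $G$, the TPP capacity is $\beta(G):=\max\{npm : G \text{ realizes } \langle n,p,m\rangle\}$. *)

theory Defs
  imports "HOL-Algebra.Algebra"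
begin

definition quotient_set :: "('a, 'b) monoid_scheme \<Rightarrow> 'a set \<Rightarrow> 'a set" where
  "quotient_set G A = {monoid.mult G x (m_inv G y) | x y. x \<in> A \<and> y \<in> A}"

definition TPP :: "('a, 'b) monoid_scheme \<Rightarrow> 'a set \<Rightarrow> 'a set \<Rightarrow> 'a set \<Rightarrow> bool" where
  "TPP G S1 S2 S3 \<longleftrightarrow>
     S1 \<subseteq> carrier G \<and> S2 \<subseteq> carrier G \<and> S3 \<subseteq> carrier G \<and>
     S1 \<noteq> {} \<and> S2 \<noteq> {} \<and> S3 \<noteq> {} \<and>
     (\<forall>s1 \<in> quotient_set G S1. \<forall>s2 \<in> quotient_set G S2. \<forall>s3 \<in> quotient_set G S3.
        (monoid.mult G (monoid.mult G s1 s2) s3 = one G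
          \<longleftrightarrow> s1 = one G \<and> s2 = one G \<and> s3 = one G))"

definition realizes :: "('a, 'b) monoid_scheme \<Rightarrow> nat \<Rightarrow> nat \<Rightarrow> nat \<Rightarrow> bool" where
  "realizes G n p m \<longleftrightarrow>
     (\<exists>S1 S2 S3. TPP G S1 S2 S3 \<and> card S1 = n \<and> card S2 = p \<and> card S3 = m)"

definition TPP_capacity :: "('a, 'b) monoid_scheme \<Rightarrow> nat" where
  "TPP_capacity G = Max {n * p * m | n p m. realizes G n p m}"

end

theory Submission
  imports Defs
begin

text \<open>
  \<open>G\<close> permutes the four right cosets of \<open>S\<close> by right multiplication, and \<open>S\<close> is the
  stabiliser of the coset \<open>S\<close>. As \<open>N\<^sub>G(S) = S\<close>, no other coset is fixed by \<open>S\<close>, so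
  every \<open>S\<close>-orbit on the remaining three cosets has at least two points and \<open>S\<close> is
  transitive on them. Fix a coset \<open>\<omega> \<noteq> S\<close> with stabiliser \<open>H\<close> (a conjugate of \<open>S\<close>),
  an element \<open>t\<close> interchanging \<open>S\<close> and \<open>\<omega>\<close>, and three elements of \<open>S\<close> sending \<open>\<omega>\<close> to
  the three cosets other than \<open>S\<close>. These sets satisfy the TPP: if \<open>h x y = 1\<close>, then
  \<open>x y\<close> fixes \<open>\<omega>\<close>; since \<open>y \<in> S\<close> fixes the coset \<open>S\<close>, \<open>x\<close> cannot move \<open>\<omega>\<close> to \<open>S\<close>,
  so \<open>x = 1\<close>, and then \<open>y = 1\<close>. Hence \<open>\<beta>(G) \<ge> 6 |S| = 3 |G| / 2\<close>.
\<close>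

lemma (in group) quotient_set_carrier:
  "A \<subseteq> carrier G \<Longrightarrow> quotient_set G A \<subseteq> carrier G"
  unfolding quotient_set_def by auto

lemma (in group) quotient_set_subgroup:
  assumes "subgroup H G" "A \<subseteq> H"
  shows "quotient_set G A \<subseteq> H"
  using assms unfolding quotient_set_def
  by (auto intro: subgroup.m_closed subgroup.m_inv_closed)

lemma (in group) quotient_set_pair_one:
  "t \<in> carrier G \<Longrightarrow> quotient_set G {\<one>, t} \<subseteq> {\<one>, t, inv t}"
  unfolding quotient_set_def by auto

lemma (in group) TPP_subgroupI:
  assumes H: "subgroup H G"
    and T: "T \<subseteq> carrier G" "T \<noteq> {}" and U: "U \<subseteq> carrier G" "U \<noteq> {}"
    and only_one: "\<And>x y. x \<in> quotient_set G T \<Longrightarrow> y \<in> quotient_set G U \<Longrightarrow> x \<otimes> y \<in> H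
      \<Longrightarrow> x = \<one> \<and> y = \<one>"
  shows "TPP G H T U"
proof -
  have "h = \<one> \<and> x = \<one> \<and> y = \<one>"
    if h: "h \<in> quotient_set G H" and x: "x \<in> quotient_set G T" and y: "y \<in> quotient_set G U"
      and prod: "h \<otimes> x \<otimes> y = \<one>" for h x y
  proof -
    have "h \<in> H" using h quotient_set_subgroup[OF H order.refl] by blast
    then have hG: "h \<in> carrier G" using subgroup.mem_carrier[OF H] by blast
    have xG: "x \<in> carrier G" and yG: "y \<in> carrier G"
      using x y quotient_set_carrier T U by blast+
    have "x \<otimes> y = inv h"
      using inv_solve_left[of "x \<otimes> y" h \<one>] prod hG xG yG by (simp add: m_assoc)
    then have "x \<otimes> y \<in> H" using \<open>h \<in> H\<close> subgroup.m_inv_closed[OF H] by simp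
    then have "x = \<one>" "y = \<one>" using x y only_one by blast+
    with prod hG show ?thesis by simp
  qed
  then show ?thesis
    unfolding TPP_def using H T U subgroup.subset subgroup.one_closed by fastforce
qed

lemma TPP_capacity_ge:
  assumes "finite (carrier G)" "realizes G n p m"
  shows "n * p * m \<le> TPP_capacity G"
proof -
  define N where "N = card (carrier G)"
  have "{n * p * m | n p m. realizes G n p m} \<subseteq> {..N * N * N}"
  proof
    fix k assume "k \<in> {n * p * m | n p m. realizes G n p m}"
    then obtain S1 S2 S3 where k: "k = card S1 * card S2 * card S3" "TPP G S1 S2 S3"
      unfolding realizes_def by blast
    then have "card S1 \<le> N" "card S2 \<le> N" "card S3 \<le> N"
      unfolding TPP_def N_def using card_mono[OF assms(1)] by auto
    then show "k \<in> {..N * N * N}" using k(1) by (simp add: mult_le_mono)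
  qed
  then have "finite {n * p * m | n p m. realizes G n p m}" using finite_subset by blast
  then show ?thesis unfolding TPP_capacity_def using assms(2) by (blast intro: Max_ge)
qed

lemma (in group) card_conjugate:
  assumes "finite (carrier G)" "H \<subseteq> carrier G" "g \<in> carrier G" "h \<in> carrier G"
  shows "card ((g <# H) #> h) = card H"
proof -
  have "g <# H \<subseteq> carrier G" using assms by (simp add: l_coset_subset_G)
  then have "card ((g <# H) #> h) = card (g <# H)"
    using card_rcosets_equal[OF rcosetsI[of "g <# H" h]] assms by simp
  moreover have "g <# H \<in> lcosets H" using assms(3) unfolding LCOSETS_def by blast
  ultimately show ?thesis using l_card_cosets_equal assms(1,2) by simp
qed

lemma (in group) r_coset_inv_cancel:
  "P \<subseteq> carrier G \<Longrightarrow> g \<in> carrier G \<Longrightarrow> P #> g #> inv g = P"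
  by (simp add: coset_mult_assoc)

lemma (in group) rcosets_r_coset_closed:
  assumes "subgroup S G" "P \<in> rcosets S" "g \<in> carrier G"
  shows "P #> g \<in> rcosets S"
proof -
  obtain x where "x \<in> carrier G" "P = S #> x" using assms(2) unfolding RCOSETS_def by blast
  then show ?thesis
    using assms coset_mult_assoc rcosetsI subgroup.subset by (metis m_closed)
qed

lemma (in group) TPP_coset_stabilizer:
  assumes S: "subgroup S G" and H: "subgroup H G"
    and \<omega>: "\<omega> \<in> rcosets S" "\<omega> \<noteq> S" and H_fixes: "\<And>h. h \<in> H \<Longrightarrow> \<omega> #> h = \<omega>"
    and t: "t \<in> carrier G" "S #> t = \<omega>" "\<omega> #> t = S"
    and U: "U \<subseteq> S" "U \<noteq> {}" "inj_on (\<lambda>u. \<omega> #> u) U"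
  shows "TPP G H {\<one>, t} U"
proof (rule TPP_subgroupI[OF H])
  have SG: "S \<subseteq> carrier G" using S by (rule subgroup.subset)
  have \<omega>G: "\<omega> \<subseteq> carrier G" using subgroup.rcosets_carrier[OF S is_group \<omega>(1)] .
  show "{\<one>, t} \<subseteq> carrier G" "{\<one>, t} \<noteq> {}" "U \<subseteq> carrier G" "U \<noteq> {}"
    using t U SG by auto
  fix x y
  assume x: "x \<in> quotient_set G {\<one>, t}" and y: "y \<in> quotient_set G U" and "x \<otimes> y \<in> H"
  have x_cases: "x \<in> {\<one>, t, inv t}" using quotient_set_pair_one[OF t(1)] x by blast
  have yS: "y \<in> S" using quotient_set_subgroup[OF S U(1)] y by blast
  have xG: "x \<in> carrier G" and yG: "y \<in> carrier G" using x_cases t(1) yS SG by auto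
  have returns: "\<omega> #> x #> y = \<omega>"
    using H_fixes[OF \<open>x \<otimes> y \<in> H\<close>] coset_mult_assoc[OF \<omega>G xG yG] by simp
  have "\<omega> #> x \<noteq> S"
  proof
    assume "\<omega> #> x = S"
    then have "\<omega> = S #> y" using returns by simp
    with \<omega>(2) show False using coset_join2[OF yG S yS] by simp
  qed
  moreover have "\<omega> #> inv t = S" using r_coset_inv_cancel[OF SG t(1)] t(2) by simp
  ultimately have x1: "x = \<one>" using x_cases t(3) by auto
  obtain u v where uv: "y = u \<otimes> inv v" "u \<in> U" "v \<in> U"
    using y unfolding quotient_set_def by blast
  have "\<omega> #> (u \<otimes> inv v) = \<omega>" using returns x1 uv(1) \<omega>G by simp
  then have "\<omega> #> u = \<omega> #> v" using coset_mult_inv1 uv U(1) SG \<omega>G by blast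
  then have "u = v" using inj_onD[OF U(3)] uv(2,3) by blast
  then show "x = \<one> \<and> y = \<one>" using x1 uv(1,3) U(1) SG by auto
qed

locale self_normalising_index_four = group G for G (structure) +
  fixes S
  assumes subgroup_S: "subgroup S G"
    and finite_carrier: "finite (carrier G)"
    and self_normalising: "normalizer G S = S"
    and index_four: "card (rcosets S) = 4"
begin

lemma S_subset: "S \<subseteq> carrier G"
  using subgroup_S by (rule subgroup.subset)

lemma rcosets_subset: "P \<in> rcosets S \<Longrightarrow> P \<subseteq> carrier G"
  using subgroup.rcosets_carrier[OF subgroup_S is_group] .

lemma finite_rcosets: "finite (rcosets S)"
  using index_four card.infinite by fastforce

lemma fixed_coset_eq_S:
  assumes P: "P \<in> rcosets S" and fixed: "\<And>s. s \<in> S \<Longrightarrow> P #> s = P"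
  shows "P = S"
proof -
  obtain x where x: "x \<in> carrier G" "P = S #> x" using P unfolding RCOSETS_def by blast
  have "x \<otimes> s \<otimes> inv x \<in> S" if s: "s \<in> S" for s
  proof -
    have sG: "s \<in> carrier G" using s S_subset by blast
    have "S #> (x \<otimes> s) = S #> x"
      using fixed[OF s] x coset_mult_assoc[OF S_subset x(1) sG] by simp
    then have "S #> (x \<otimes> s \<otimes> inv x) = S"
      using coset_mult_inv2 x(1) sG S_subset by simp
    then show ?thesis using coset_join1 subgroup_S x(1) sG by blast
  qed
  then have "(x <# S) #> inv x \<subseteq> S" unfolding l_coset_def r_coset_def by auto
  moreover have "card ((x <# S) #> inv x) = card S"
    using card_conjugate finite_carrier S_subset x(1) by simp
  moreover have "finite S" using finite_carrier S_subset finite_subset by blast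
  ultimately have "(x <# S) #> inv x = S" using card_subset_eq by blast
  then have "x \<in> normalizer G S"
    unfolding normalizer_def stabilizer_def using x(1) S_subset by simp
  then have "x \<in> S" using self_normalising by simp
  then show "P = S" using x coset_join2 subgroup_S by simp
qed

lemma rcosets_minus_S_closed:
  assumes P: "P \<in> rcosets S" "P \<noteq> S" and s: "s \<in> S"
  shows "P #> s \<in> rcosets S - {S}"
proof -
  have sG: "s \<in> carrier G" using s S_subset by blast
  have "P #> s \<noteq> S"
  proof
    assume "P #> s = S"
    then have "P = S #> inv s" using r_coset_inv_cancel[OF rcosets_subset[OF P(1)] sG] by simp
    then show False using P(2) coset_join2 subgroup_S subgroup.m_inv_closed s sG by fastforce
  qed
  then show ?thesis using rcosets_r_coset_closed[OF subgroup_S P(1) sG] by blast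
qed

lemma S_transitive_on_rcosets:
  assumes P: "P \<in> rcosets S" "P \<noteq> S" and Q: "Q \<in> rcosets S" "Q \<noteq> S"
  shows "\<exists>s\<in>S. P #> s = Q"
proof (rule ccontr)
  assume no_s: "\<not> (\<exists>s\<in>S. P #> s = Q)"
  define orbit_of where "orbit_of B = (\<lambda>s. B #> s) ` S" for B
  have orbit_sub: "orbit_of B \<subseteq> rcosets S - {S}" if "B \<in> rcosets S" "B \<noteq> S" for B
    unfolding orbit_of_def using rcosets_minus_S_closed that by blast
  have finite_orbit: "finite (orbit_of B)" if "B \<in> rcosets S" "B \<noteq> S" for B
    using orbit_sub[OF that] finite_rcosets finite_subset by blast
  have orbit_card: "2 \<le> card (orbit_of B)" if B: "B \<in> rcosets S" "B \<noteq> S" for B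
  proof -
    obtain s where s: "s \<in> S" "B #> s \<noteq> B" using fixed_coset_eq_S B by blast
    have "B #> \<one> \<in> orbit_of B"
      unfolding orbit_of_def using subgroup.one_closed[OF subgroup_S] by (rule imageI)
    then have "B \<in> orbit_of B" using rcosets_subset[OF B(1)] by simp
    moreover have "B #> s \<in> orbit_of B" unfolding orbit_of_def using s(1) by blast
    ultimately have "{B, B #> s} \<subseteq> orbit_of B" by blast
    then have "card {B, B #> s} \<le> card (orbit_of B)" by (rule card_mono[OF finite_orbit[OF B]])
    then show ?thesis using s(2) by simp
  qed
  have "orbit_of P \<inter> orbit_of Q = {}"
  proof (rule ccontr)
    assume "orbit_of P \<inter> orbit_of Q \<noteq> {}"
    then obtain s s' where s: "s \<in> S" "s' \<in> S" "P #> s = Q #> s'"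
      unfolding orbit_of_def by blast
    have sG: "s \<in> carrier G" and s'G: "s' \<in> carrier G" using s S_subset by blast+
    have "Q = P #> s #> inv s'" using r_coset_inv_cancel[OF rcosets_subset[OF Q(1)] s'G] s(3) by simp
    also have "\<dots> = P #> (s \<otimes> inv s')" using coset_mult_assoc rcosets_subset[OF P(1)] sG s'G by simp
    finally show False
      using no_s subgroup.m_closed[OF subgroup_S s(1) subgroup.m_inv_closed[OF subgroup_S s(2)]] by blast
  qed
  then have "card (orbit_of P \<union> orbit_of Q) = card (orbit_of P) + card (orbit_of Q)"
    using card_Un_disjoint[OF finite_orbit[OF P] finite_orbit[OF Q]] by blast
  moreover have "2 \<le> card (orbit_of P)" "2 \<le> card (orbit_of Q)" using orbit_card P Q by blast+
  moreover have "card (orbit_of P \<union> orbit_of Q) \<le> card (rcosets S - {S})"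
    using orbit_sub[OF P] orbit_sub[OF Q] finite_rcosets by (intro card_mono) auto
  moreover have "card (rcosets S - {S}) = 3"
    using index_four subgroup.subgroup_in_rcosets[OF subgroup_S is_group] by simp
  ultimately show False by linarith
qed

lemma exists_swapping_element:
  assumes \<omega>: "\<omega> \<in> rcosets S" "\<omega> \<noteq> S"
  shows "\<exists>t\<in>carrier G. S #> t = \<omega> \<and> \<omega> #> t = S"
proof -
  obtain a where a: "a \<in> carrier G" "\<omega> = S #> a" using \<omega>(1) unfolding RCOSETS_def by blast
  have "inv a \<notin> S"
  proof
    assume "inv a \<in> S"
    then have "inv (inv a) \<in> S" by (rule subgroup.m_inv_closed[OF subgroup_S])
    then have "S #> a = S" using coset_join2[OF a(1) subgroup_S] a(1) by simp
    then show False using \<omega>(2) a(2) by simp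
  qed
  then have "S #> inv a \<noteq> S" using coset_join1[OF _ inv_closed[OF a(1)] subgroup_S] by blast
  moreover have "S #> inv a \<in> rcosets S" using rcosetsI[OF S_subset inv_closed[OF a(1)]] .
  ultimately obtain s where s: "s \<in> S" "S #> inv a #> s = \<omega>"
    using S_transitive_on_rcosets[OF _ _ \<omega>] by blast
  have sG: "s \<in> carrier G" using s(1) S_subset by blast
  have "S #> (inv a \<otimes> s) = \<omega>"
    using s(2) coset_mult_assoc[OF S_subset inv_closed[OF a(1)] sG] by simp
  moreover have "a \<otimes> (inv a \<otimes> s) = s" using a(1) sG by (simp add: m_assoc[symmetric])
  then have "\<omega> #> (inv a \<otimes> s) = S"
    using a coset_mult_assoc[OF S_subset a(1) m_closed[OF inv_closed[OF a(1)] sG]]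
      coset_join2[OF sG subgroup_S s(1)] by simp
  ultimately show ?thesis using a(1) sG by blast
qed

lemma exists_injective_triple:
  assumes \<omega>: "\<omega> \<in> rcosets S" "\<omega> \<noteq> S"
  shows "\<exists>U\<subseteq>S. card U = 3 \<and> inj_on (\<lambda>u. \<omega> #> u) U"
proof -
  have "card {S, \<omega>} = 2" using \<omega>(2) by simp
  moreover have "{S, \<omega>} \<subseteq> rcosets S"
    using \<omega>(1) subgroup.subgroup_in_rcosets[OF subgroup_S is_group] by blast
  ultimately have "card (rcosets S - {S, \<omega>}) = 2"
    using index_four by (simp add: card_Diff_subset)
  then obtain P Q where PQ: "rcosets S - {S, \<omega>} = {P, Q}" "P \<noteq> Q"
    unfolding card_2_iff by blast
  then have P: "P \<in> rcosets S" "P \<noteq> S" "P \<noteq> \<omega>" and Q: "Q \<in> rcosets S" "Q \<noteq> S" "Q \<noteq> \<omega>"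
    by blast+
  obtain s where s: "s \<in> S" "\<omega> #> s = P" using S_transitive_on_rcosets[OF \<omega> P(1,2)] by blast
  obtain s' where s': "s' \<in> S" "\<omega> #> s' = Q" using S_transitive_on_rcosets[OF \<omega> Q(1,2)] by blast
  define U where "U = {\<one>, s, s'}"
  have image: "(\<lambda>u. \<omega> #> u) ` U = {\<omega>, P, Q}"
    unfolding U_def using s s' rcosets_subset[OF \<omega>(1)] by simp
  have "card {\<omega>, P, Q} = 3" using P(3) Q(3) PQ(2) by simp
  then have "3 \<le> card U" using card_image_le[of U "\<lambda>u. \<omega> #> u"] image U_def by simp
  moreover have "card U \<le> 3" unfolding U_def by (simp add: card_insert_le_m1)
  ultimately have "card U = 3" by simp
  moreover have "finite U" unfolding U_def by simp
  then have "inj_on (\<lambda>u. \<omega> #> u) U"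
    using inj_on_iff_eq_card image \<open>card U = 3\<close> \<open>card {\<omega>, P, Q} = 3\<close> by metis
  moreover have "U \<subseteq> S" unfolding U_def using s(1) s'(1) subgroup.one_closed[OF subgroup_S] by blast
  ultimately show ?thesis by blast
qed

lemma realizes_card_S_2_3: "realizes G (card S) 2 3"
proof -
  have "rcosets S \<noteq> {S}" using index_four by force
  then obtain \<omega> where \<omega>: "\<omega> \<in> rcosets S" "\<omega> \<noteq> S"
    using subgroup.subgroup_in_rcosets[OF subgroup_S is_group] by blast
  then obtain a where a: "a \<in> carrier G" "\<omega> = S #> a" unfolding RCOSETS_def by blast
  obtain t where t: "t \<in> carrier G" "S #> t = \<omega>" "\<omega> #> t = S" using exists_swapping_element[OF \<omega>] by blast
  obtain U where U: "U \<subseteq> S" "card U = 3" "inj_on (\<lambda>u. \<omega> #> u) U"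
    using exists_injective_triple[OF \<omega>] by blast
  define H where "H = (inv a <# S) #> a"
  have H_subgroup: "subgroup H G"
    unfolding H_def using subgroup_conjugation_is_surj1[OF a(1) subgroup_S] .
  have "\<omega> #> h = \<omega>" if h: "h \<in> H" for h
  proof -
    obtain s where s: "s \<in> S" "h = inv a \<otimes> s \<otimes> a"
      using h unfolding H_def l_coset_def r_coset_def by blast
    have sG: "s \<in> carrier G" using s(1) S_subset by blast
    have "a \<otimes> h = s \<otimes> a" using s(2) a(1) sG by (simp add: m_assoc[symmetric])
    then have "\<omega> #> h = S #> s #> a"
      using a s(2) sG coset_mult_assoc S_subset by simp
    then show ?thesis using coset_join2[OF sG subgroup_S s(1)] a(2) by simp
  qed
  moreover have "U \<noteq> {}" using U(2) by force
  ultimately have "TPP G H {\<one>, t} U"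
    using TPP_coset_stabilizer[OF subgroup_S H_subgroup \<omega> _ t U(1) _ U(3)] by blast
  moreover have "card H = card S"
    unfolding H_def using card_conjugate[OF finite_carrier S_subset inv_closed[OF a(1)] a(1)] .
  moreover have "t \<noteq> \<one>"
  proof
    assume "t = \<one>"
    then show False using t(2) \<omega>(2) coset_mult_one[OF S_subset] by simp
  qed
  then have "card {\<one>, t} = 2" by simp
  ultimately show ?thesis unfolding realizes_def using U(2) by blast
qed

end

theorem mainTheorem5:
  fixes G :: "('a, 'b) monoid_scheme" and S :: "'a set"
  assumes "group G"
    and "finite (carrier G)"
    and "\<not> comm_group G"
    and "subgroup S G"
    and "normalizer G S = S"
    and "card (rcosets\<^bsub>G\<^esub> S) = 4"
  shows "real (TPP_capacity G) \<ge> 3 / 2 * real (card (carrier G))"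
proof -
  interpret self_normalising_index_four G S
    using assms by (simp add: self_normalising_index_four_def self_normalising_index_four_axioms_def)
  have "card S * 2 * 3 \<le> TPP_capacity G"
    using TPP_capacity_ge[OF finite_carrier realizes_card_S_2_3] .
  moreover have "card (carrier G) = 4 * card S"
    using lagrange[OF subgroup_S] index_four by (simp add: order_def)
  ultimately show ?thesis by simp
qed

end
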